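(* Let $N(u)=\sum_{\alpha\in\mathbb C}m(\alpha)u^{\alpha}$ be a finite sum of powers with integer coefficients $m(\alpha)\in\mathbb Z$. Then $$\zeta_N(s)=\prod_{\alpha}\Big(\frac1{s-\alpha}\Big)^{m(\alpha)},\qquad \zeta_{N^*}(s)=\prod_{\alpha}\Big(\frac1{s+\alpha}\Big)^{m(\alpha)},$$ so that $\varepsilon_N(s)=(-1)^{N(1)}$. If $N\neq0$ satisfies $N(1/u)=cu^{-\omega}N(u)$ for some $c,\omega\in\mathbb C$, then $c=\pm1$ and $$\zeta_N(\omega-s)=(-1)^{N(1)}\zeta_N(s)^{c}.$$
   Context: For measurable $N:(1,\infty)\to\mathbb C$ let $Z_N(w,s)=\frac1{\Gamma(w)}\int_1^\infty\frac{N(u)}{u^{s+1}}(\log u)^{w-1}du$ (convergent for $\operatorname{Re}(s)$ large and $w$ in an open domain, extended holomorphically to $w=0$), and $\zeta_N(s)=\exp\big(\frac{\partial}{\partial w}Z_N(w,s)\big|_{w=0}\big)$, continued meromorphically in $s$. For $N$ defined on $(0,\infty)$, $N^*(u)=N(1/u)$, and $\varepsilon_N(s)=\zeta_{N^*}(-s)/\zeta_N(s)$. *)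

theory Defs
  imports "HOL-Complex_Analysis.Complex_Analysis"
begin

definition Z_integrand :: "(real \<Rightarrow> complex) \<Rightarrow> complex \<Rightarrow> complex \<Rightarrow> real \<Rightarrow> complex" where
  "Z_integrand N w s u = N u / (of_real u powr (s + 1)) * (of_real (ln u)) powr (w - 1)"

definition Z_int :: "(real \<Rightarrow> complex) \<Rightarrow> complex \<Rightarrow> complex \<Rightarrow> complex" where
  "Z_int N w s = rGamma w * integral {1<..} (Z_integrand N w s)"

text \<open>g is a holomorphic extension (in w, for fixed s) to a connected open domain containing 0
  of Z_N(.,s), where the latter is given by the (absolutely) convergent integral on a
  nonempty open set of w.\<close>
definition is_Z_ext :: "(real \<Rightarrow> complex) \<Rightarrow> complex \<Rightarrow> (complex \<Rightarrow> complex) \<Rightarrow> bool" where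
  "is_Z_ext N s g \<longleftrightarrow> (\<exists>D U. open D \<and> connected D \<and> 0 \<in> D \<and> open U \<and> U \<noteq> {} \<and> U \<subseteq> D \<and>
      g holomorphic_on D \<and>
      (\<forall>w\<in>U. Z_integrand N w s absolutely_integrable_on {1<..} \<and> g w = Z_int N w s))"

definition zeta_val :: "(real \<Rightarrow> complex) \<Rightarrow> complex \<Rightarrow> complex" where
  "zeta_val N s = exp (deriv (SOME g. is_Z_ext N s g) 0)"

text \<open>f is the meromorphic continuation (in normal form) to all of C of zeta_val N,
  originally defined on a right half plane.\<close>
definition is_zeta_cont :: "(real \<Rightarrow> complex) \<Rightarrow> (complex \<Rightarrow> complex) \<Rightarrow> bool" where
  "is_zeta_cont N f \<longleftrightarrow> f nicely_meromorphic_on UNIV \<and>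
     (\<exists>\<sigma>::real. \<forall>s. Re s > \<sigma> \<longrightarrow> (\<exists>g. is_Z_ext N s g) \<and> f s = zeta_val N s)"

definition zeta :: "(real \<Rightarrow> complex) \<Rightarrow> complex \<Rightarrow> complex" where
  "zeta N = (SOME f. is_zeta_cont N f)"

definition dual :: "(real \<Rightarrow> complex) \<Rightarrow> real \<Rightarrow> complex" where
  "dual N u = N (1 / u)"

definition epsilon :: "(real \<Rightarrow> complex) \<Rightarrow> complex \<Rightarrow> complex" where
  "epsilon N s = zeta (dual N) (- s) / zeta N s"

definition powsum :: "(complex \<Rightarrow> int) \<Rightarrow> real \<Rightarrow> complex" where
  "powsum m u = (\<Sum>a\<in>{a. m a \<noteq> 0}. of_int (m a) * of_real u powr a)"

end

theory Submission
  imports Defs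
begin

text \<open>Substituting u = e^t turns Z_N(w,s) into the Mellin transform
  Gamma(w)^-1 * integral_0^oo (sum_a m(a) e^(-(s-a)t)) t^(w-1) dt of an exponential sum, which for
  Re s large equals sum_a m(a) (s - a)^-w. As an extension only has to agree with the integral on
  some open set of w, one also needs that the integral is holomorphic in w on every half plane
  where it converges. The derivative at w = 0 is -sum_a m(a) log(s - a), so zeta_N agrees with the
  rational function prod_a (s - a)^-m(a) on a half plane, hence everywhere by uniqueness of nicely
  meromorphic continuation. The dual N* is the power sum with negated exponents.

  For the functional equation, u = e^t turns N(1/u) = c u^-omega N(u) into an identity of
  exponential sums, and linear independence of exponentials gives m(a) = c m(omega - a). Hence
  c^2 = 1, and a |-> omega - a permutes the exponents, which turns the product for
  zeta_N(omega - s) into the one for zeta_N(s)^c.\<close>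

section \<open>Holomorphic parameter integrals over \<open>(0, \<infinity>)\<close>\<close>

lemma integral_split_cbox:
  fixes f :: "'a::euclidean_space \<Rightarrow> 'b::banach"
  assumes f: "f integrable_on S" and sub: "cbox a b \<subseteq> S"
  shows "(\<lambda>t. if t \<in> cbox a b then 0 else f t) integrable_on S"
    and "integral S f = integral (cbox a b) f + integral S (\<lambda>t. if t \<in> cbox a b then 0 else f t)"
proof -
  have "f integrable_on cbox a b"
    by (rule integrable_on_subcbox[OF f sub])
  hence inner: "(\<lambda>t. if t \<in> cbox a b then f t else 0) integrable_on S"
    and inner_eq: "integral S (\<lambda>t. if t \<in> cbox a b then f t else 0) = integral (cbox a b) f"
    using sub integrable_restrict_Int[where S="cbox a b" and T=S and f=f]
      integral_restrict_Int[where S="cbox a b" and T=S and f=f]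
    by (simp_all add: Int_absorb2)
  have split: "f t = (if t \<in> cbox a b then f t else 0) + (if t \<in> cbox a b then 0 else f t)" for t
    by simp
  show outer: "(\<lambda>t. if t \<in> cbox a b then 0 else f t) integrable_on S"
    using integrable_diff[OF f inner] by (rule integrable_eq) auto
  show "integral S f = integral (cbox a b) f + integral S (\<lambda>t. if t \<in> cbox a b then 0 else f t)"
    by (subst integral_cong[OF split]) (simp only: integral_add[OF inner outer] inner_eq)
qed

abbreviation Ioi_truncation :: "nat \<Rightarrow> real set" where
  "Ioi_truncation n \<equiv> cbox (1 / Suc n) (Suc n)"

lemma Ioi_truncation_subset: "Ioi_truncation n \<subseteq> {0<..}"
proof
  fix t :: real assume "t \<in> cbox (1 / Suc n) (Suc n)"
  hence "1 / (1 + real n) \<le> t" by simp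
  moreover have "0 < 1 / (1 + real n)" by simp
  ultimately show "t \<in> {0<..}" by (simp only: greaterThan_iff)
qed

lemma eventually_in_Ioi_truncation:
  assumes "t > 0"
  shows "eventually (\<lambda>n. t \<in> Ioi_truncation n) sequentially"
proof -
  obtain N1 :: nat where N1: "1 / t < N1" using reals_Archimedean2 by blast
  obtain N2 :: nat where N2: "t < N2" using reals_Archimedean2 by blast
  have "t \<in> Ioi_truncation n" if "N1 + N2 \<le> n" for n
  proof -
    have "1 / t < Suc n" using N1 that by linarith
    hence "1 / Suc n \<le> t" using assms by (simp add: field_simps)
    moreover have "t \<le> Suc n" using N2 that by linarith
    ultimately show ?thesis by simp
  qed
  thus ?thesis unfolding eventually_sequentially by blast
qed

lemma tendsto_integral_outside_Ioi_truncation: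
  fixes g :: "real \<Rightarrow> real"
  assumes g: "g integrable_on {0<..}" and g0: "\<And>t. t > 0 \<Longrightarrow> g t \<ge> 0"
  shows "(\<lambda>n. integral {0<..} (\<lambda>t. if t \<in> Ioi_truncation n then 0 else g t)) \<longlonglongrightarrow> 0"
proof -
  have "(\<lambda>n. integral {0<..} (\<lambda>t. if t \<in> Ioi_truncation n then 0 else g t))
          \<longlonglongrightarrow> integral {0<..} (\<lambda>t::real. 0::real)"
  proof (rule dominated_convergence(2)[where f="\<lambda>n t. if t \<in> Ioi_truncation n then 0 else g t" and g="\<lambda>t. 0", OF _ g])
    show "(\<lambda>t. if t \<in> Ioi_truncation n then 0 else g t) integrable_on {0<..}" for n
      using integral_split_cbox(1)[OF g Ioi_truncation_subset] by simp
    show "norm (if t \<in> Ioi_truncation n then 0 else g t) \<le> g t" if "t \<in> {0<..}" for n t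
      using g0 that by auto
    show "(\<lambda>n. if t \<in> Ioi_truncation n then 0 else g t) \<longlonglongrightarrow> 0" if "t \<in> {0<..}" for t
      by (rule tendsto_eventually, rule eventually_mono[OF eventually_in_Ioi_truncation]) (use that in auto)
  qed
  thus ?thesis by simp
qed

lemma uniform_limit_integral_Ioi_truncation:
  fixes F :: "'a \<Rightarrow> real \<Rightarrow> 'b::euclidean_space"
  assumes g: "g integrable_on {0<..}" "\<And>t. t > 0 \<Longrightarrow> g t \<ge> 0"
    and F: "\<And>z. z \<in> K \<Longrightarrow> F z integrable_on {0<..}"
    and dom: "\<And>z t. z \<in> K \<Longrightarrow> t > 0 \<Longrightarrow> norm (F z t) \<le> g t"
  shows "uniform_limit K (\<lambda>n z. integral (Ioi_truncation n) (F z)) (\<lambda>z. integral {0<..} (F z)) sequentially"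
proof (rule uniform_limitI)
  fix \<epsilon> :: real assume "\<epsilon> > 0"
  have "eventually (\<lambda>n. integral {0<..} (\<lambda>t. if t \<in> Ioi_truncation n then 0 else g t) < \<epsilon>) sequentially"
    by (rule order_tendstoD(2)[OF tendsto_integral_outside_Ioi_truncation]) (use g \<open>\<epsilon> > 0\<close> in auto)
  then show "eventually (\<lambda>n. \<forall>z\<in>K. dist (integral (Ioi_truncation n) (F z)) (integral {0<..} (F z)) < \<epsilon>) sequentially"
  proof eventually_elim
    case (elim n)
    show ?case
    proof
      fix z assume z: "z \<in> K"
      note splitF = integral_split_cbox[OF F[OF z] Ioi_truncation_subset[of n]]
      note splitg = integral_split_cbox[OF g(1) Ioi_truncation_subset[of n]]
      have "dist (integral (Ioi_truncation n) (F z)) (integral {0<..} (F z))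
            = norm (integral {0<..} (\<lambda>t. if t \<in> Ioi_truncation n then 0 else F z t))"
        unfolding splitF(2) by (simp add: dist_norm)
      also have "\<dots> \<le> integral {0<..} (\<lambda>t. if t \<in> Ioi_truncation n then 0 else g t)"
        by (rule integral_norm_bound_integral[OF splitF(1) splitg(1)]) (auto intro: dom[OF z])
      finally show "dist (integral (Ioi_truncation n) (F z)) (integral {0<..} (F z)) < \<epsilon>"
        using elim by linarith
    qed
  qed
qed

lemma absolutely_integrable_on_dominated:
  fixes f :: "real \<Rightarrow> 'b::euclidean_space"
  assumes "continuous_on {0<..} f" "g integrable_on {0<..}" "\<And>t. t > 0 \<Longrightarrow> norm (f t) \<le> g t"
  shows "f absolutely_integrable_on {0<..}"
  by (rule measurable_bounded_by_integrable_imp_absolutely_integrable[OF _ _ assms(2)])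
     (use assms in \<open>auto intro: continuous_imp_measurable_on_sets_lebesgue\<close>)

lemma holomorphic_on_integral_Ioi_truncation:
  fixes F F' :: "complex \<Rightarrow> real \<Rightarrow> complex"
  assumes C: "convex C" "C \<subseteq> S"
    and contF: "\<And>z. z \<in> S \<Longrightarrow> continuous_on {0<..} (F z)"
    and der: "\<And>z t. z \<in> S \<Longrightarrow> t > 0 \<Longrightarrow> ((\<lambda>z. F z t) has_field_derivative F' z t) (at z)"
    and contF': "continuous_on (S \<times> {0<..}) (\<lambda>(z, t). F' z t)"
  shows "(\<lambda>z. integral (Ioi_truncation n) (F z)) holomorphic_on C"
proof (rule leibniz_rule_holomorphic[where fx = F', OF _ _ _ C(1)])
  fix z t assume z: "z \<in> C" and t: "t \<in> cbox (1 / Suc n) (Suc n)"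
  have "z \<in> S" using z C(2) by auto
  moreover have "t > 0" using subsetD[OF Ioi_truncation_subset t] by simp
  ultimately show "((\<lambda>z. F z t) has_field_derivative F' z t) (at z within C)"
    by (rule has_field_derivative_at_within[OF der])
next
  fix z assume "z \<in> C"
  with C(2) have "continuous_on (cbox (1 / Suc n) (Suc n)) (F z)"
    by (intro continuous_on_subset[OF contF Ioi_truncation_subset]) auto
  thus "F z integrable_on cbox (1 / Suc n) (Suc n)" by (rule integrable_continuous)
next
  show "continuous_on (C \<times> cbox (1 / Suc n) (Suc n)) (\<lambda>(z, t). F' z t)"
    by (rule continuous_on_subset[OF contF']) (use C(2) Ioi_truncation_subset in auto)
qed

lemma holomorphic_on_integral_Ioi:
  fixes F F' :: "complex \<Rightarrow> real \<Rightarrow> complex"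
  assumes S: "open S"
    and contF: "\<And>z. z \<in> S \<Longrightarrow> continuous_on {0<..} (F z)"
    and der: "\<And>z t. z \<in> S \<Longrightarrow> t > 0 \<Longrightarrow> ((\<lambda>z. F z t) has_field_derivative F' z t) (at z)"
    and contF': "continuous_on (S \<times> {0<..}) (\<lambda>(z, t). F' z t)"
    and dom: "\<And>K. compact K \<Longrightarrow> K \<subseteq> S \<Longrightarrow>
                \<exists>g. g integrable_on {0<..} \<and> (\<forall>z\<in>K. \<forall>t>0. norm (F z t) \<le> g t)"
  shows "(\<lambda>z. integral {0<..} (F z)) holomorphic_on S"
proof -
  have "(\<lambda>z. integral {0<..} (F z)) holomorphic_on ball z0 r"
    if z0: "z0 \<in> S" and r: "cball z0 r \<subseteq> S" "r > 0" for z0 r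
  proof -
    obtain g where g: "g integrable_on {0<..}" and bound: "\<And>z t. z \<in> cball z0 r \<Longrightarrow> t > 0 \<Longrightarrow> norm (F z t) \<le> g t"
      using dom[of "cball z0 r"] r by auto
    have g0: "g t \<ge> 0" if "t > 0" for t
      using order_trans[OF norm_ge_zero bound[of z0 t]] that r(2) by simp
    have Fint: "F z integrable_on {0<..}" if "z \<in> cball z0 r" for z
    proof -
      have "z \<in> S" using that r by auto
      hence "F z absolutely_integrable_on {0<..}"
        by (rule absolutely_integrable_on_dominated[OF contF g bound[OF that]])
      thus ?thesis by (rule set_lebesgue_integral_eq_integral(1))
    qed
    have trunc_holo: "(\<lambda>z. integral (Ioi_truncation n) (F z)) holomorphic_on cball z0 r" for n
      by (rule holomorphic_on_integral_Ioi_truncation[OF convex_cball r(1) contF der contF'])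
    have "eventually (\<lambda>n. continuous_on (cball z0 r) (\<lambda>z. integral (Ioi_truncation n) (F z)) \<and>
             (\<lambda>z. integral (Ioi_truncation n) (F z)) holomorphic_on ball z0 r) sequentially"
      by (intro always_eventually allI conjI holomorphic_on_imp_continuous_on trunc_holo
            holomorphic_on_subset[OF trunc_holo ball_subset_cball])
    from holomorphic_uniform_limit[OF this uniform_limit_integral_Ioi_truncation[OF g g0 Fint bound]]
    show ?thesis by auto
  qed
  hence "(\<lambda>z. integral {0<..} (F z)) analytic_on S"
    using S unfolding analytic_on_def by (meson open_contains_cball)
  thus ?thesis by (rule analytic_imp_holomorphic)
qed

section \<open>The Gamma integral with complex scaling\<close>

text \<open>The Gamma integrand \<open>t\<^sup>w\<^sup>-\<^sup>1 e\<^sup>-\<^sup>l\<^sup>t\<close>, written via \<open>exp\<close> and the real \<open>ln\<close> so that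
  no branch of the complex logarithm is involved.\<close>
definition Gamma_kernel :: "complex \<Rightarrow> complex \<Rightarrow> real \<Rightarrow> complex" where
  "Gamma_kernel w l t = exp ((w - 1) * of_real (ln t) - l * of_real t)"

lemma norm_Gamma_kernel:
  assumes "t > 0"
  shows "norm (Gamma_kernel w l t) = t powr (Re w - 1) * exp (- (Re l * t))"
proof -
  have "norm (Gamma_kernel w l t) = exp ((Re w - 1) * ln t - Re l * t)"
    by (simp add: Gamma_kernel_def norm_exp_eq_Re)
  thus ?thesis
    using assms by (simp add: powr_def exp_diff exp_minus divide_inverse)
qed

lemma continuous_on_Gamma_kernel: "continuous_on {0<..} (Gamma_kernel w l)"
  unfolding Gamma_kernel_def by (intro continuous_intros) auto

lemma integrable_Gamma_kernel_bound:
  fixes x a :: real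
  assumes "x > 0" "a > 0"
  shows "(\<lambda>t. t powr (x - 1) * exp (- (a * t))) integrable_on {0<..}"
proof -
  have "(\<lambda>t. norm (complex_of_real t powr (of_real x - 1) / of_real (exp (a * t)))) integrable_on {0<..}"
    using absolutely_integrable_Gamma_integral[of "of_real x" a] assms
    by (simp add: absolutely_integrable_on_def)
  thus ?thesis
    by (rule integrable_spike[where S="{}"])
       (simp_all add: norm_divide norm_powr_real_powr exp_minus field_simps)
qed

lemma absolutely_integrable_Gamma_kernel:
  assumes "Re w > 0" "Re l > 0"
  shows "Gamma_kernel w l absolutely_integrable_on {0<..}"
  by (rule absolutely_integrable_on_dominated[OF continuous_on_Gamma_kernel integrable_Gamma_kernel_bound[OF assms]])
     (simp add: norm_Gamma_kernel)

lemma integral_Gamma_kernel_of_real: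
  assumes w: "Re w > 0" and c: "c > 0"
  shows "integral {0<..} (Gamma_kernel w (of_real c)) = Gamma w * exp (- w * of_real (ln c))"
proof -
  define f where "f t = complex_of_real t powr (w - 1) / of_real (exp t)" for t
  have "(f has_integral Gamma w) {0..}"
    unfolding f_def using Gamma_integral_complex[OF w] by simp
  hence "(f has_integral Gamma w) {0<..}"
    by (subst (asm) has_integral_spike_set_eq) (auto intro: negligible_subset[of "{0}"])
  moreover have "f absolutely_integrable_on {0<..}"
    unfolding f_def using absolutely_integrable_Gamma_integral[of w 1] w by simp
  moreover have "(\<lambda>x. c * x) ` {0<..} = {0<..}"
  proof safe
    fix y :: real assume "y > 0"
    thus "y \<in> (\<lambda>x. c * x) ` {0<..}" using c by (intro image_eqI[of _ _ "y / c"]) auto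
  qed (use c in auto)
  ultimately have scaled: "integral {0<..} (\<lambda>x. \<bar>c\<bar> *\<^sub>R f (c * x)) = Gamma w"
    using has_absolute_integral_change_of_variables_real[of "{0<..}" "\<lambda>x. c * x" "\<lambda>_. c" f "Gamma w"] c
    by (auto intro!: derivative_eq_intros simp: inj_on_def)
  have kernel_eq: "Gamma_kernel w (of_real c) x = exp (- w * of_real (ln c)) * (\<bar>c\<bar> *\<^sub>R f (c * x))"
    if "x > 0" for x
  proof -
    have "Ln (of_real (c * x)) = of_real (ln (c * x))"
      using that c by (intro Ln_of_real) simp
    hence "Ln (of_real c * of_real x) = of_real (ln c + ln x)"
      using that c by (simp add: ln_mult)
    moreover have "complex_of_real (exp (c * x)) = exp (of_real c * of_real x)"
      by (metis exp_of_real of_real_mult)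
    ultimately have "\<bar>c\<bar> *\<^sub>R f (c * x) = exp (of_real (ln c)) * exp ((w - 1) * of_real (ln c + ln x)) / exp (of_real c * of_real x)"
      using that c by (simp add: f_def powr_def scaleR_conv_of_real exp_of_real)
    also have "\<dots> = exp (w * of_real (ln c) + ((w - 1) * of_real (ln x) - of_real c * of_real x))"
      by (simp add: exp_add exp_diff algebra_simps)
    finally have "exp (- w * of_real (ln c)) * (\<bar>c\<bar> *\<^sub>R f (c * x))
      = exp (- w * of_real (ln c) + (w * of_real (ln c) + ((w - 1) * of_real (ln x) - of_real c * of_real x)))"
      by (simp only: mult_exp_exp)
    thus ?thesis
      by (simp add: Gamma_kernel_def algebra_simps)
  qed
  have "integral {0<..} (Gamma_kernel w (of_real c))
        = integral {0<..} (\<lambda>x. exp (- w * of_real (ln c)) * (\<bar>c\<bar> *\<^sub>R f (c * x)))"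
    by (rule integral_cong) (simp add: kernel_eq)
  also have "\<dots> = exp (- w * of_real (ln c)) * Gamma w"
    by (simp only: integral_mult_right scaled)
  finally show ?thesis by simp
qed

lemma compact_right_half_plane_imp_Re_ge:
  assumes "compact K" "K \<subseteq> {l. Re l > 0}"
  obtains \<delta> where "\<delta> > 0" "\<And>l. l \<in> K \<Longrightarrow> \<delta> \<le> Re l"
proof (cases "K = {}")
  case False
  have "compact (Re ` K)" by (intro compact_continuous_image continuous_intros assms(1))
  then obtain x where "x \<in> Re ` K" "\<And>y. y \<in> Re ` K \<Longrightarrow> x \<le> y"
    using compact_attains_inf[of "Re ` K"] False by auto
  with assms(2) that show ?thesis by auto
qed (use that[of 1] in auto)

lemma holomorphic_on_integral_Gamma_kernel:
  assumes w: "Re w > 0"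
  shows "(\<lambda>l. integral {0<..} (Gamma_kernel w l)) holomorphic_on {l. Re l > 0}"
proof (rule holomorphic_on_integral_Ioi[where F' = "\<lambda>l t. - of_real t * Gamma_kernel w l t"])
  fix l and t :: real
  show "((\<lambda>l. Gamma_kernel w l t) has_field_derivative - of_real t * Gamma_kernel w l t) (at l)"
    unfolding Gamma_kernel_def by (auto intro!: derivative_eq_intros)
next
  show "continuous_on ({l. Re l > 0} \<times> {0<..}) (\<lambda>(l, t). - of_real t * Gamma_kernel w l t)"
    unfolding case_prod_unfold Gamma_kernel_def by (intro continuous_intros) auto
next
  fix K assume K: "compact K" "K \<subseteq> {l. Re l > 0}"
  obtain \<delta> where \<delta>: "\<delta> > 0" "\<And>l. l \<in> K \<Longrightarrow> \<delta> \<le> Re l"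
    using compact_right_half_plane_imp_Re_ge[OF K] by blast
  have "norm (Gamma_kernel w l t) \<le> t powr (Re w - 1) * exp (- (\<delta> * t))" if "l \<in> K" "t > 0" for l t
  proof -
    have "\<delta> * t \<le> Re l * t" using \<delta> that by (intro mult_right_mono) auto
    thus ?thesis using that by (simp add: norm_Gamma_kernel mult_left_mono)
  qed
  thus "\<exists>g. g integrable_on {0<..} \<and> (\<forall>l\<in>K. \<forall>t>0. norm (Gamma_kernel w l t) \<le> g t)"
    using integrable_Gamma_kernel_bound[OF w \<delta>(1)] by blast
qed (auto simp: open_halfspace_Re_gt continuous_on_Gamma_kernel)

text \<open>Both sides are holomorphic in \<open>l\<close> on the right half plane and agree on the positive reals.\<close>
lemma integral_Gamma_kernel:
  assumes w: "Re w > 0" and l: "Re l > 0"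
  shows "integral {0<..} (Gamma_kernel w l) = Gamma w * exp (- w * Ln l)"
proof -
  have "integral {0<..} (Gamma_kernel w l) - Gamma w * exp (- w * Ln l) = 0"
  proof (rule analytic_continuation[where S = "{l. Re l > 0}" and U = "of_real ` {0<..}" and \<xi> = 1
      and f = "\<lambda>l. integral {0<..} (Gamma_kernel w l) - Gamma w * exp (- w * Ln l)"])
    show "(\<lambda>l. integral {0<..} (Gamma_kernel w l) - Gamma w * exp (- w * Ln l)) holomorphic_on {l. Re l > 0}"
      by (intro holomorphic_intros holomorphic_on_integral_Gamma_kernel w)
         (auto simp: complex_nonpos_Reals_iff)
    show "(1::complex) islimpt of_real ` {0<..}"
      unfolding islimpt_approachable
    proof (intro allI impI)
      fix e :: real assume "e > 0"
      hence "of_real (1 + e/2) \<in> complex_of_real ` {0<..}" by (intro imageI) simp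
      with \<open>e > 0\<close> show "\<exists>x'\<in>complex_of_real ` {0<..}. x' \<noteq> 1 \<and> dist x' 1 < e"
        by (intro bexI[of _ "of_real (1 + e/2)"]) (auto simp: dist_norm)
    qed
    show "integral {0<..} (Gamma_kernel w z) - Gamma w * exp (- w * Ln z) = 0"
      if "z \<in> of_real ` {0<..}" for z
      using that integral_Gamma_kernel_of_real[OF w] by (auto simp: Ln_of_real)
  qed (use l in \<open>auto simp: open_halfspace_Re_gt connected_halfspace_Re_gt\<close>)
  thus ?thesis by simp
qed

section \<open>Mellin transforms of exponential sums\<close>

definition expsum :: "complex set \<Rightarrow> (complex \<Rightarrow> complex) \<Rightarrow> (complex \<Rightarrow> complex) \<Rightarrow> real \<Rightarrow> complex" where
  "expsum A c l t = (\<Sum>a\<in>A. c a * exp (- l a * of_real t))"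

definition expsum_kernel ::
    "complex set \<Rightarrow> (complex \<Rightarrow> complex) \<Rightarrow> (complex \<Rightarrow> complex) \<Rightarrow> complex \<Rightarrow> real \<Rightarrow> complex" where
  "expsum_kernel A c l w t = (\<Sum>a\<in>A. c a * Gamma_kernel w (l a) t)"

lemma expsum_kernel_eq: "expsum_kernel A c l w t = expsum A c l t * exp ((w - 1) * of_real (ln t))"
  unfolding expsum_kernel_def expsum_def Gamma_kernel_def sum_distrib_right
proof (intro sum.cong refl)
  fix a
  have "exp (- l a * of_real t) * exp ((w - 1) * of_real (ln t)) = exp (- l a * of_real t + (w - 1) * of_real (ln t))"
    by (simp only: mult_exp_exp)
  thus "c a * exp ((w - 1) * of_real (ln t) - l a * of_real t) = c a * exp (- l a * of_real t) * exp ((w - 1) * of_real (ln t))"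
    by (simp add: algebra_simps)
qed

lemma norm_expsum_le:
  assumes "\<And>a. a \<in> A \<Longrightarrow> Re (l a) \<ge> 1" "t > 0"
  shows "norm (expsum A c l t) \<le> (\<Sum>a\<in>A. norm (c a)) * exp (- t)"
proof -
  have "norm (expsum A c l t) \<le> (\<Sum>a\<in>A. norm (c a * exp (- l a * of_real t)))"
    unfolding expsum_def by (rule norm_sum)
  also have "\<dots> \<le> (\<Sum>a\<in>A. norm (c a) * exp (- t))"
  proof (rule sum_mono)
    fix a assume "a \<in> A"
    hence "exp (- (Re (l a) * t)) \<le> exp (- t)" using assms by (simp add: mult_right_mono_neg)
    thus "norm (c a * exp (- l a * of_real t)) \<le> norm (c a) * exp (- t)"
      by (simp add: norm_mult norm_exp_eq_Re mult_left_mono)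
  qed
  finally show ?thesis by (simp add: sum_distrib_right)
qed

lemma norm_expsum_kernel:
  "t > 0 \<Longrightarrow> norm (expsum_kernel A c l w t) = norm (expsum A c l t) * t powr (Re w - 1)"
  by (simp add: expsum_kernel_eq norm_mult norm_exp_eq_Re powr_def)

lemma continuous_on_expsum_kernel: "continuous_on {0<..} (expsum_kernel A c l w)"
  unfolding expsum_kernel_def by (intro continuous_intros continuous_on_Gamma_kernel)

lemma powr_le_powr_add:
  fixes t x y z :: real
  assumes "t > 0" "y \<le> x" "x \<le> z"
  shows "t powr x \<le> t powr y + t powr z"
proof (cases "t \<le> 1")
  case True
  hence "t powr x \<le> t powr y" using assms by (intro powr_mono') auto
  thus ?thesis by (simp add: add_increasing2)
next
  case False
  hence "t powr x \<le> t powr z" using assms by (intro powr_mono) auto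
  thus ?thesis by (simp add: add_increasing)
qed

lemma integral_expsum_kernel:
  assumes fin: "finite A" and l: "\<And>a. a \<in> A \<Longrightarrow> Re (l a) \<ge> 1" and w: "Re w > 0"
  shows "expsum_kernel A c l w absolutely_integrable_on {0<..}"
    and "integral {0<..} (expsum_kernel A c l w) = Gamma w * (\<Sum>a\<in>A. c a * exp (- w * Ln (l a)))"
proof -
  have l0: "Re (l a) > 0" if "a \<in> A" for a
    using l[OF that] by linarith
  have summand: "(\<lambda>t. c a * Gamma_kernel w (l a) t) absolutely_integrable_on {0<..}" if "a \<in> A" for a
    using absolutely_integrable_Gamma_kernel[OF w l0[OF that]] by (rule set_integrable_mult_right)
  show "expsum_kernel A c l w absolutely_integrable_on {0<..}"
    unfolding expsum_kernel_def[abs_def] by (rule absolutely_integrable_sum[OF fin summand])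
  have "integral {0<..} (expsum_kernel A c l w) = (\<Sum>a\<in>A. integral {0<..} (\<lambda>t. c a * Gamma_kernel w (l a) t))"
    unfolding expsum_kernel_def[abs_def]
    by (rule integral_sum[OF fin]) (use summand set_lebesgue_integral_eq_integral(1) in blast)
  also have "\<dots> = (\<Sum>a\<in>A. c a * (Gamma w * exp (- w * Ln (l a))))"
    by (intro sum.cong refl) (simp add: integral_Gamma_kernel[OF w l0])
  finally show "integral {0<..} (expsum_kernel A c l w) = Gamma w * (\<Sum>a\<in>A. c a * exp (- w * Ln (l a)))"
    by (simp add: sum_distrib_left algebra_simps)
qed

text \<open>On a compact set of exponents the kernel is dominated by its value at \<open>w\<^sub>1\<close> (controlling
  \<open>t \<rightarrow> 0\<close>) plus a Gamma integrand (controlling \<open>t \<rightarrow> \<infinity>\<close>).\<close>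
lemma holomorphic_on_integral_expsum_kernel:
  assumes l: "\<And>a. a \<in> A \<Longrightarrow> Re (l a) \<ge> 1"
    and int1: "expsum_kernel A c l w1 absolutely_integrable_on {0<..}"
  shows "(\<lambda>w. integral {0<..} (expsum_kernel A c l w)) holomorphic_on {w. Re w > Re w1}"
proof (rule holomorphic_on_integral_Ioi[where F' = "\<lambda>w t. expsum_kernel A c l w t * of_real (ln t)"])
  fix w and t :: real
  show "((\<lambda>w. expsum_kernel A c l w t) has_field_derivative expsum_kernel A c l w t * of_real (ln t)) (at w)"
    unfolding expsum_kernel_eq by (auto intro!: derivative_eq_intros)
next
  show "continuous_on ({w. Re w > Re w1} \<times> {0<..}) (\<lambda>(w, t). expsum_kernel A c l w t * of_real (ln t))"
    unfolding case_prod_unfold expsum_kernel_eq expsum_def by (intro continuous_intros) auto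
next
  fix K assume K: "compact K" "K \<subseteq> {w. Re w > Re w1}"
  obtain B where B: "\<And>w. w \<in> K \<Longrightarrow> norm w \<le> B"
    using compact_imp_bounded[OF K(1)] unfolding bounded_iff by blast
  define M where "M = max B 1"
  have M0: "M > 0" by (simp add: M_def)
  define C where "C = (\<Sum>a\<in>A. norm (c a))"
  define g where "g t = norm (expsum_kernel A c l w1 t) + C * (t powr (M - 1) * exp (- t))" for t
  have "g integrable_on {0<..}"
    unfolding g_def using int1 integrable_cmul[OF integrable_Gamma_kernel_bound[OF M0 zero_less_one], of C]
    by (intro integrable_add) (auto simp: absolutely_integrable_on_def)
  moreover have "norm (expsum_kernel A c l w t) \<le> g t" if w: "w \<in> K" and t: "t > 0" for w t
  proof -
    have "Re w1 \<le> Re w" using w K(2) by auto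
    moreover have "Re w \<le> M" using B[OF w] complex_Re_le_cmod[of w] by (simp add: M_def)
    ultimately have "norm (expsum_kernel A c l w t) \<le> norm (expsum A c l t) * (t powr (Re w1 - 1) + t powr (M - 1))"
      unfolding norm_expsum_kernel[OF t] by (intro mult_left_mono powr_le_powr_add) (use t in auto)
    also have "\<dots> = norm (expsum_kernel A c l w1 t) + norm (expsum A c l t) * t powr (M - 1)"
      by (simp add: norm_expsum_kernel[OF t] algebra_simps)
    also have "norm (expsum A c l t) * t powr (M - 1) \<le> C * exp (- t) * t powr (M - 1)"
      by (intro mult_right_mono) (use norm_expsum_le[OF l t, where c = c] in \<open>auto simp: C_def\<close>)
    finally show ?thesis by (simp add: g_def algebra_simps)
  qed
  ultimately show "\<exists>g. g integrable_on {0<..} \<and> (\<forall>w\<in>K. \<forall>t>0. norm (expsum_kernel A c l w t) \<le> g t)"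
    by blast
qed (auto simp: open_halfspace_Re_gt continuous_on_expsum_kernel)

lemma rGamma_integral_expsum_kernel:
  assumes fin: "finite A" and l: "\<And>a. a \<in> A \<Longrightarrow> Re (l a) \<ge> 1"
    and int1: "expsum_kernel A c l w1 absolutely_integrable_on {0<..}" and w0: "Re w1 < Re w0"
  shows "rGamma w0 * integral {0<..} (expsum_kernel A c l w0) = (\<Sum>a\<in>A. c a * exp (- w0 * Ln (l a)))"
proof (rule analytic_continuation_open[where s = "{w. Re w > max (Re w1) 0}" and s' = "{w. Re w > Re w1}"
    and f = "\<lambda>w. rGamma w * integral {0<..} (expsum_kernel A c l w)"
    and g = "\<lambda>w. \<Sum>a\<in>A. c a * exp (- w * Ln (l a))"])
  show "(\<lambda>w. rGamma w * integral {0<..} (expsum_kernel A c l w)) holomorphic_on {w. Re w > Re w1}"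
    by (intro holomorphic_intros holomorphic_on_integral_expsum_kernel[OF l int1])
  show "open {w. Re w > max (Re w1) 0}" by (rule open_halfspace_Re_gt)
  show "{w. Re w > max (Re w1) 0} \<noteq> {}"
    by (intro ex_in_conv[THEN iffD1] exI[of _ "of_real (max (Re w1) 0 + 1)"]) auto
  show "rGamma w * integral {0<..} (expsum_kernel A c l w) = (\<Sum>a\<in>A. c a * exp (- w * Ln (l a)))"
    if "w \<in> {w. Re w > max (Re w1) 0}" for w
  proof -
    have w: "Re w > 0" using that by simp
    hence "Gamma w \<noteq> 0" by (auto simp: Gamma_eq_zero_iff elim!: nonpos_Ints_cases)
    thus ?thesis using integral_expsum_kernel(2)[OF fin l w, where c = c] by (simp add: rGamma_inverse_Gamma)
  qed
qed (auto intro!: holomorphic_intros simp: open_halfspace_Re_gt connected_halfspace_Re_gt w0)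

section \<open>\<open>Z\<^sub>N\<close> and \<open>\<zeta>\<^sub>N\<close> on a right half plane\<close>

lemma of_real_exp_powr: "complex_of_real (exp t) powr z = exp (z * of_real t)"
  by (simp add: powr_def Ln_of_real)

lemma powsum_exp: "powsum m (exp t) = (\<Sum>a | m a \<noteq> 0. of_int (m a) * exp (a * of_real t))"
  unfolding powsum_def by (simp add: of_real_exp_powr)

lemma Z_integrand_powsum_exp:
  assumes "t > 0"
  shows "exp t *\<^sub>R Z_integrand (powsum m) w s (exp t)
         = expsum_kernel {a. m a \<noteq> 0} (\<lambda>a. of_int (m a)) (\<lambda>a. s - a) w t"
proof -
  have "exp t *\<^sub>R Z_integrand (powsum m) w s (exp t)
      = exp (of_real t) * (\<Sum>a | m a \<noteq> 0. of_int (m a) * exp (a * of_real t)) / exp ((s + 1) * of_real t)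
          * exp ((w - 1) * of_real (ln t))"
    using assms by (simp add: Z_integrand_def powsum_exp of_real_exp_powr scaleR_conv_of_real powr_def Ln_of_real
        exp_of_real)
  also have "exp (of_real t) * (\<Sum>a | m a \<noteq> 0. of_int (m a) * exp (a * of_real t)) / exp ((s + 1) * of_real t)
      = (\<Sum>a | m a \<noteq> 0. of_int (m a) * exp (- (s - a) * of_real t))"
    unfolding sum_distrib_left sum_divide_distrib
  proof (intro sum.cong refl)
    fix a
    have "exp (of_real t) * exp (a * of_real t) = exp (- (s - a) * of_real t) * exp ((s + 1) * of_real t)"
      by (simp only: mult_exp_exp) (simp add: algebra_simps)
    thus "exp (of_real t) * (of_int (m a) * exp (a * of_real t)) / exp ((s + 1) * of_real t)
        = of_int (m a) * exp (- (s - a) * of_real t)"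
      by (simp add: field_simps)
  qed
  finally show ?thesis
    by (simp add: expsum_kernel_eq expsum_def)
qed

lemma exp_substitution_Ioi:
  fixes f :: "real \<Rightarrow> 'a::euclidean_space"
  shows "f absolutely_integrable_on {1<..} \<longleftrightarrow> (\<lambda>t. exp t *\<^sub>R f (exp t)) absolutely_integrable_on {0<..}"
    and "f absolutely_integrable_on {1<..} \<Longrightarrow> integral {1<..} f = integral {0<..} (\<lambda>t. exp t *\<^sub>R f (exp t))"
proof -
  have "exp ` {0<..} = ({1<..} :: real set)"
  proof safe
    fix y :: real assume "y > 1"
    thus "y \<in> exp ` {0<..}" by (intro image_eqI[of _ _ "ln y"]) auto
  qed auto
  moreover have "(exp has_real_derivative exp t) (at t within {0<..})" for t
    by (rule DERIV_exp[THEN has_field_derivative_at_within])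
  ultimately have "(\<lambda>t. exp t *\<^sub>R f (exp t)) absolutely_integrable_on {0<..} \<and> integral {0<..} (\<lambda>t. exp t *\<^sub>R f (exp t)) = b
         \<longleftrightarrow> f absolutely_integrable_on {1<..} \<and> integral {1<..} f = b" for b
    using has_absolute_integral_change_of_variables_real[of "{0<..}" exp exp f b] by (simp add: inj_on_def)
  thus "f absolutely_integrable_on {1<..} \<longleftrightarrow> (\<lambda>t. exp t *\<^sub>R f (exp t)) absolutely_integrable_on {0<..}"
    and "f absolutely_integrable_on {1<..} \<Longrightarrow> integral {1<..} f = integral {0<..} (\<lambda>t. exp t *\<^sub>R f (exp t))"
    by blast+
qed

lemma Z_integrand_powsum_substitution:
  shows "Z_integrand (powsum m) w s absolutely_integrable_on {1<..}
           \<longleftrightarrow> expsum_kernel {a. m a \<noteq> 0} (\<lambda>a. of_int (m a)) (\<lambda>a. s - a) w absolutely_integrable_on {0<..}"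
    and "Z_integrand (powsum m) w s absolutely_integrable_on {1<..} \<Longrightarrow>
         integral {1<..} (Z_integrand (powsum m) w s)
           = integral {0<..} (expsum_kernel {a. m a \<noteq> 0} (\<lambda>a. of_int (m a)) (\<lambda>a. s - a) w)"
proof -
  let ?F = "expsum_kernel {a. m a \<noteq> 0} (\<lambda>a. of_int (m a)) (\<lambda>a. s - a) w"
  have eq: "exp t *\<^sub>R Z_integrand (powsum m) w s (exp t) = ?F t" if "t \<in> {0<..}" for t
    using Z_integrand_powsum_exp that by simp
  show "Z_integrand (powsum m) w s absolutely_integrable_on {1<..} \<longleftrightarrow> ?F absolutely_integrable_on {0<..}"
    unfolding exp_substitution_Ioi(1) by (rule absolutely_integrable_spike_eq[of "{}"]) (use eq in auto)
  show "integral {1<..} (Z_integrand (powsum m) w s) = integral {0<..} ?F"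
    if "Z_integrand (powsum m) w s absolutely_integrable_on {1<..}"
    unfolding exp_substitution_Ioi(2)[OF that] by (rule integral_cong) (use eq in auto)
qed

text \<open>\<open>\<Sum>\<^sub>a m(a) (s - a)\<^sup>-\<^sup>w\<close>: the continuation of \<open>Z\<^sub>N(w,s)\<close> in \<open>w\<close> for \<open>N = powsum m\<close>.\<close>
definition Z_powsum :: "(complex \<Rightarrow> int) \<Rightarrow> complex \<Rightarrow> complex \<Rightarrow> complex" where
  "Z_powsum m s w = (\<Sum>a | m a \<noteq> 0. of_int (m a) * exp (- w * Ln (s - a)))"

lemma holomorphic_Z_powsum [holomorphic_intros]: "Z_powsum m s holomorphic_on X"
  unfolding Z_powsum_def by (intro holomorphic_intros)

lemma Z_int_powsum:
  assumes fin: "finite {a. m a \<noteq> 0}" and Re_ge: "\<And>a. m a \<noteq> 0 \<Longrightarrow> Re (s - a) \<ge> 1"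
    and int1: "Z_integrand (powsum m) w1 s absolutely_integrable_on {1<..}" and w1: "Re w1 < Re w"
    and int: "Z_integrand (powsum m) w s absolutely_integrable_on {1<..}"
  shows "Z_int (powsum m) w s = Z_powsum m s w"
  using rGamma_integral_expsum_kernel[OF fin _ int1[unfolded Z_integrand_powsum_substitution(1)] w1] Re_ge
  by (simp add: Z_int_def Z_integrand_powsum_substitution(2)[OF int] Z_powsum_def)

lemma is_Z_ext_Z_powsum:
  assumes fin: "finite {a. m a \<noteq> 0}" and Re_ge: "\<And>a. m a \<noteq> 0 \<Longrightarrow> Re (s - a) \<ge> 1"
  shows "is_Z_ext (powsum m) s (Z_powsum m s)"
proof -
  have "Z_integrand (powsum m) w s absolutely_integrable_on {1<..} \<and> Z_powsum m s w = Z_int (powsum m) w s"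
    if w: "Re w > 0" for w
  proof
    note expsum = integral_expsum_kernel[OF fin _ w, where c = "\<lambda>a. of_int (m a)" and l = "\<lambda>a. s - a"]
    show int: "Z_integrand (powsum m) w s absolutely_integrable_on {1<..}"
      using expsum(1) Re_ge by (simp add: Z_integrand_powsum_substitution(1))
    have "Gamma w \<noteq> 0" using w by (auto simp: Gamma_eq_zero_iff elim!: nonpos_Ints_cases)
    thus "Z_powsum m s w = Z_int (powsum m) w s"
      using expsum(2) Re_ge
      by (simp add: Z_int_def Z_integrand_powsum_substitution(2)[OF int] Z_powsum_def rGamma_inverse_Gamma)
  qed
  moreover have "{w. Re w > 0} \<noteq> {}"
    by (intro ex_in_conv[THEN iffD1] exI[of _ 1]) simp
  ultimately show ?thesis
    unfolding is_Z_ext_def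
    by (intro exI[of _ UNIV] exI[of _ "{w. Re w > 0}"]) (auto intro: holomorphic_Z_powsum open_halfspace_Re_gt)
qed

text \<open>Any extension agrees with \<open>Z_powsum m s\<close> on its domain of convergence \<open>U\<close>: each point of
  \<open>U\<close> has a point of \<open>U\<close> with smaller real part, so \<open>Z_int_powsum\<close> applies there.\<close>
lemma is_Z_ext_powsum_eq:
  assumes fin: "finite {a. m a \<noteq> 0}" and Re_ge: "\<And>a. m a \<noteq> 0 \<Longrightarrow> Re (s - a) \<ge> 1"
    and g: "is_Z_ext (powsum m) s g"
  shows "eventually (\<lambda>w. g w = Z_powsum m s w) (nhds 0)"
proof -
  obtain D U where D: "open D" "connected D" "0 \<in> D" "g holomorphic_on D"
    and U: "open U" "U \<noteq> {}" "U \<subseteq> D"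
    and gU: "\<And>w. w \<in> U \<Longrightarrow> Z_integrand (powsum m) w s absolutely_integrable_on {1<..} \<and> g w = Z_int (powsum m) w s"
    using g unfolding is_Z_ext_def by blast
  have onU: "g w = Z_powsum m s w" if w: "w \<in> U" for w
  proof -
    obtain r where r: "r > 0" "ball w r \<subseteq> U" using U(1) w open_contains_ball by blast
    have "w - of_real (r / 2) \<in> ball w r" using r by (simp add: dist_norm)
    hence "Z_integrand (powsum m) (w - of_real (r / 2)) s absolutely_integrable_on {1<..}"
      using r gU by blast
    from Z_int_powsum[OF fin Re_ge this] gU[OF w] r(1) show ?thesis by simp
  qed
  have "g w = Z_powsum m s w" if "w \<in> D" for w
    by (rule analytic_continuation_open[where s = U and s' = D and f = g and g = "Z_powsum m s"])
       (use D U onU that in \<open>auto intro: holomorphic_Z_powsum\<close>)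
  thus ?thesis
    using D(1,3) by (intro eventually_nhds_in_open[THEN eventually_mono]) auto
qed

lemma zeta_val_powsum:
  assumes fin: "finite {a. m a \<noteq> 0}" and Re_ge: "\<And>a. m a \<noteq> 0 \<Longrightarrow> Re (s - a) \<ge> 1"
  shows "zeta_val (powsum m) s = (\<Prod>a | m a \<noteq> 0. (1 / (s - a)) powi m a)"
proof -
  have "is_Z_ext (powsum m) s (SOME g. is_Z_ext (powsum m) s g)"
    by (rule someI[where P = "is_Z_ext (powsum m) s", OF is_Z_ext_Z_powsum[OF fin Re_ge]])
  hence "deriv (SOME g. is_Z_ext (powsum m) s g) 0 = deriv (Z_powsum m s) 0"
    by (intro deriv_cong_ev is_Z_ext_powsum_eq[OF fin Re_ge]) auto
  also have "\<dots> = (\<Sum>a | m a \<noteq> 0. of_int (m a) * - Ln (s - a))"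
    unfolding Z_powsum_def by (intro DERIV_imp_deriv) (auto intro!: derivative_eq_intros sum.cong)
  finally have "zeta_val (powsum m) s = (\<Prod>a | m a \<noteq> 0. exp (of_int (m a) * - Ln (s - a)))"
    by (simp add: zeta_val_def exp_sum[OF fin])
  also have "\<dots> = (\<Prod>a | m a \<noteq> 0. (1 / (s - a)) powi m a)"
  proof (intro prod.cong refl)
    fix a assume "a \<in> {a. m a \<noteq> 0}"
    hence "s - a \<noteq> 0" using Re_ge[of a] by auto
    hence "exp (- Ln (s - a)) = 1 / (s - a)" by (simp add: exp_minus divide_inverse)
    thus "exp (of_int (m a) * - Ln (s - a)) = (1 / (s - a)) powi m a"
      by (simp only: exp_power_int[symmetric])
  qed
  finally show ?thesis .
qed

section \<open>The meromorphic continuation\<close>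

lemma nicely_meromorphic_on_UNIV_eqI:
  assumes f: "f nicely_meromorphic_on UNIV" and g: "g nicely_meromorphic_on UNIV"
    and U: "open U" "U \<noteq> {}" and eq: "\<And>z. z \<in> U \<Longrightarrow> f z = g z"
  shows "f = g"
proof
  fix z
  define h where "h w = f w - g w" for w
  have h: "h meromorphic_on UNIV"
    using f g unfolding h_def nicely_meromorphic_on_def by (intro meromorphic_intros) auto
  have h0: "remove_sings h u = 0" if "u \<in> U" for u
  proof (rule remove_sings_eqI)
    have "eventually (\<lambda>w. w \<in> U) (at u)" using U(1) that by (rule eventually_at_in_open')
    thus "h \<midarrow>u\<rightarrow> 0" by (rule tendsto_eventually[OF eventually_mono]) (simp add: h_def eq)
  qed
  have "remove_sings h constant_on UNIV"
    by (rule constant_on_extend_nicely_meromorphic_on[OF remove_sings_nicely_meromorphic[OF h] _ U(1)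
          open_UNIV connected_UNIV U(2) subset_UNIV])
       (auto simp: constant_on_def h0)
  then obtain c where c: "\<And>w. remove_sings h w = c" by (auto simp: constant_on_def)
  moreover from U(2) obtain z0 where "z0 \<in> U" by blast
  ultimately have h0_all: "remove_sings h w = 0" for w using h0 by metis
  have "eventually (\<lambda>w. remove_sings h w = h w) (at z)"
    by (rule eventually_remove_sings_eq_at[OF meromorphic_on_isolated_singularity])
       (rule meromorphic_on_subset[OF h], simp)
  hence ev: "eventually (\<lambda>w. f w = g w) (at z)"
    by eventually_elim (simp add: h0_all h_def)
  hence pole: "is_pole f z \<longleftrightarrow> is_pole g z" by (rule is_pole_cong) simp
  show "f z = g z"
  proof (cases "is_pole f z")
    case True
    hence "\<not> f \<midarrow>z\<rightarrow> f z" "\<not> g \<midarrow>z\<rightarrow> g z"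
      using pole by (meson at_neq_bot is_pole_def not_tendsto_and_filterlim_at_infinity)+
    with f g have "f z = 0" "g z = 0" by (auto simp: nicely_meromorphic_on_def)
    thus ?thesis by simp
  next
    case False
    with pole f g have lim: "f \<midarrow>z\<rightarrow> f z" "g \<midarrow>z\<rightarrow> g z"
      unfolding nicely_meromorphic_on_def by blast+
    from lim(1) ev have "g \<midarrow>z\<rightarrow> f z" by (rule Lim_transform_eventually)
    from this lim(2) show ?thesis by (rule LIM_unique)
  qed
qed

lemma zeta_eqI:
  assumes "is_zeta_cont N f"
  shows "zeta N = f"
proof -
  have "is_zeta_cont N (zeta N)" unfolding zeta_def using assms by (rule someI[of "is_zeta_cont N"])
  with assms obtain \<sigma> \<sigma>' where
    mero: "f nicely_meromorphic_on UNIV" "zeta N nicely_meromorphic_on UNIV"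
    and \<sigma>: "\<And>s. Re s > \<sigma> \<Longrightarrow> f s = zeta_val N s" and \<sigma>': "\<And>s. Re s > \<sigma>' \<Longrightarrow> zeta N s = zeta_val N s"
    unfolding is_zeta_cont_def by blast
  show ?thesis
  proof (rule nicely_meromorphic_on_UNIV_eqI[OF mero(2,1)])
    show "open {s. Re s > max \<sigma> \<sigma>'}" by (rule open_halfspace_Re_gt)
    show "{s. Re s > max \<sigma> \<sigma>'} \<noteq> {}"
      by (intro ex_in_conv[THEN iffD1] exI[of _ "of_real (max \<sigma> \<sigma>' + 1)"]) auto
  qed (auto simp: \<sigma> \<sigma>')
qed

definition zeta_powsum :: "(complex \<Rightarrow> int) \<Rightarrow> complex \<Rightarrow> complex" where
  "zeta_powsum m s = (\<Prod>a | m a \<noteq> 0. (1 / (s - a)) powi m a)"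

lemma is_zeta_cont_powsum:
  assumes fin: "finite {a. m a \<noteq> 0}"
  shows "is_zeta_cont (powsum m) (remove_sings (zeta_powsum m))"
  unfolding is_zeta_cont_def
proof (intro conjI exI[of _ "(\<Sum>a | m a \<noteq> 0. \<bar>Re a\<bar>) + 1"] allI impI)
  show "remove_sings (zeta_powsum m) nicely_meromorphic_on UNIV"
    unfolding zeta_powsum_def by (intro remove_sings_nicely_meromorphic meromorphic_intros)
next
  fix s assume s: "Re s > (\<Sum>a | m a \<noteq> 0. \<bar>Re a\<bar>) + 1"
  have Re_ge: "Re (s - a) \<ge> 1" if "m a \<noteq> 0" for a
  proof -
    have "\<bar>Re a\<bar> \<le> (\<Sum>a | m a \<noteq> 0. \<bar>Re a\<bar>)"
      by (rule member_le_sum) (use fin that in auto)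
    thus ?thesis using s by simp
  qed
  show "\<exists>g. is_Z_ext (powsum m) s g" using is_Z_ext_Z_powsum[OF fin Re_ge] by blast
  have "s - a \<noteq> 0" if "m a \<noteq> 0" for a using Re_ge[OF that] by auto
  hence "zeta_powsum m analytic_on {s}"
    unfolding zeta_powsum_def by (intro analytic_intros) auto
  thus "remove_sings (zeta_powsum m) s = zeta_val (powsum m) s"
    by (simp add: remove_sings_at_analytic zeta_val_powsum[OF fin Re_ge] zeta_powsum_def)
qed

lemma zeta_powsum_eq:
  assumes fin: "finite {a. m a \<noteq> 0}" and s: "m s = 0"
  shows "zeta (powsum m) s = zeta_powsum m s"
proof -
  have "zeta_powsum m analytic_on {s}"
    unfolding zeta_powsum_def using s by (intro analytic_intros) auto
  thus ?thesis by (simp add: zeta_eqI[OF is_zeta_cont_powsum[OF fin]] remove_sings_at_analytic)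
qed

lemma zeta_cong:
  assumes "\<And>u. u > 1 \<Longrightarrow> N u = N' u"
  shows "zeta N = zeta N'"
proof -
  have integrand: "Z_integrand N w s u = Z_integrand N' w s u" if "u \<in> {1<..}" for w s u
    using assms that by (simp add: Z_integrand_def)
  have "Z_integrand N w s absolutely_integrable_on {1<..} \<longleftrightarrow> Z_integrand N' w s absolutely_integrable_on {1<..}" for w s
    by (rule absolutely_integrable_spike_eq[of "{}"]) (use integrand in auto)
  moreover have "Z_int N w s = Z_int N' w s" for w s
    unfolding Z_int_def by (subst integral_cong[OF integrand]) auto
  ultimately have "is_Z_ext N = is_Z_ext N'"
    by (intro ext) (simp add: is_Z_ext_def)
  thus ?thesis
    by (simp add: zeta_def is_zeta_cont_def zeta_val_def)
qed

lemma dual_powsum: "u > 0 \<Longrightarrow> dual (powsum m) u = powsum (\<lambda>a. m (- a)) u"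
proof -
  assume u: "u > 0"
  have "Ln (1 / complex_of_real u) = - of_real (ln u)"
    using u by (simp add: Ln_inverse Ln_of_real ln_inverse divide_inverse flip: of_real_inverse)
  hence "powsum m (1 / u) = (\<Sum>a | m a \<noteq> 0. of_int (m a) * of_real u powr (- a))"
    unfolding powsum_def using u by (intro sum.cong refl) (simp add: powr_def Ln_of_real)
  also have "\<dots> = powsum (\<lambda>a. m (- a)) u"
    unfolding powsum_def
    by (rule sum.reindex_bij_witness[of _ uminus uminus]) auto
  finally show ?thesis by (simp add: dual_def)
qed

lemma zeta_dual_powsum:
  assumes fin: "finite {a. m a \<noteq> 0}" and s: "m (- s) = 0"
  shows "zeta (dual (powsum m)) s = (\<Prod>a | m a \<noteq> 0. (1 / (s + a)) powi m a)"
proof -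
  have "finite {a. m (- a) \<noteq> 0}"
    using finite_vimageI[OF fin, of uminus] by (simp add: vimage_def)
  hence "zeta (powsum (\<lambda>a. m (- a))) s = zeta_powsum (\<lambda>a. m (- a)) s"
    using s by (intro zeta_powsum_eq) auto
  also have "\<dots> = (\<Prod>a | m a \<noteq> 0. (1 / (s + a)) powi m a)"
    unfolding zeta_powsum_def by (rule prod.reindex_bij_witness[of _ uminus uminus]) auto
  finally show ?thesis
    by (subst zeta_cong[of _ "powsum (\<lambda>a. m (- a))"]) (auto simp: dual_powsum)
qed

lemma power_int_sum: "(x :: 'a :: field) \<noteq> 0 \<Longrightarrow> x powi (\<Sum>a\<in>A. k a) = (\<Prod>a\<in>A. x powi k a)"
  by (induction A rule: infinite_finite_induct) (simp_all add: power_int_add)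

lemma prod_power_int_distrib: "(\<Prod>a\<in>A. f a) powi n = (\<Prod>a\<in>A. f a powi n :: 'a :: field)"
  by (induction A rule: infinite_finite_induct) (simp_all add: power_int_mult_distrib)

lemma prod_uminus_power_int:
  "(\<Prod>a\<in>A. (- x a) powi k a) = (-1) powi (\<Sum>a\<in>A. k a) * (\<Prod>a\<in>A. x a powi k a :: 'a :: field)"
proof -
  have "(- x a) powi k a = (-1) powi k a * x a powi k a" for a
    by (metis mult_minus1 power_int_mult_distrib)
  thus ?thesis by (simp add: prod.distrib power_int_sum)
qed

lemma zeta_powsum_nonzero: "finite {a. m a \<noteq> 0} \<Longrightarrow> m s = 0 \<Longrightarrow> zeta_powsum m s \<noteq> 0"
  unfolding zeta_powsum_def by (subst prod_zero_iff) auto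

lemma zeta_powsum_uminus:
  "(\<Prod>a | m a \<noteq> 0. (1 / (a - s)) powi m a) = (-1) powi (\<Sum>a | m a \<noteq> 0. m a) * zeta_powsum m s"
proof -
  have "1 / (a - s) = - (1 / (s - a))" for a by (simp add: minus_divide_right)
  thus ?thesis unfolding zeta_powsum_def by (simp add: prod_uminus_power_int)
qed

lemma epsilon_powsum:
  assumes fin: "finite {a. m a \<noteq> 0}" and s: "m s = 0"
  shows "epsilon (powsum m) s = (-1) powi (\<Sum>a | m a \<noteq> 0. m a)"
proof -
  have "zeta (dual (powsum m)) (- s) = (-1) powi (\<Sum>a | m a \<noteq> 0. m a) * zeta_powsum m s"
    using zeta_dual_powsum[OF fin] zeta_powsum_uminus s by simp
  thus ?thesis
    using zeta_powsum_eq[OF fin s] zeta_powsum_nonzero[OF fin s] by (simp add: epsilon_def)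
qed

lemma zeta_powsum_reflection:
  assumes \<epsilon>: "\<epsilon> = 1 \<or> \<epsilon> = -1" and sym: "\<And>a. m (\<omega> - a) = \<epsilon> * m a"
  shows "zeta_powsum m (\<omega> - s) = (-1) powi (\<Sum>a | m a \<noteq> 0. m a) * zeta_powsum m s powi \<epsilon>"
proof -
  have "zeta_powsum m (\<omega> - s) = (\<Prod>b | m b \<noteq> 0. (1 / (b - s)) powi (m b * \<epsilon>))"
    unfolding zeta_powsum_def
    by (rule prod.reindex_bij_witness[of _ "\<lambda>b. \<omega> - b" "\<lambda>b. \<omega> - b"]) (use \<epsilon> sym in \<open>auto simp: algebra_simps\<close>)
  also have "\<dots> = ((-1) powi (\<Sum>a | m a \<noteq> 0. m a) * zeta_powsum m s) powi \<epsilon>"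
    by (simp only: power_int_mult prod_power_int_distrib[symmetric] zeta_powsum_uminus)
  also have "\<dots> = (-1) powi (\<Sum>a | m a \<noteq> 0. m a) * zeta_powsum m s powi \<epsilon>"
    using \<epsilon> by (auto simp: power_int_mult_distrib power_int_minus_one_minus simp flip: power_int_mult)
  finally show ?thesis .
qed

section \<open>The functional equation\<close>

lemma exp_sum_eq_0_imp_coeffs_eq_0:
  fixes d :: "complex \<Rightarrow> complex"
  assumes "finite T" "\<And>z. (\<Sum>x\<in>T. d x * exp (x * z)) = 0" "x \<in> T"
  shows "d x = 0"
  using assms
proof (induction T arbitrary: d x rule: finite_induct)
  case (insert a0 T d)
  have "((\<lambda>z. \<Sum>x\<in>insert a0 T. d x * exp (x * z)) has_field_derivative
          (\<Sum>x\<in>insert a0 T. d x * x * exp (x * z))) (at z)" for z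
    by (auto intro!: derivative_eq_intros sum.cong simp: mult_ac)
  hence "((\<lambda>z. 0) has_field_derivative (\<Sum>x\<in>insert a0 T. d x * x * exp (x * z))) (at z)" for z
    using insert.prems(1) by simp
  hence deriv0: "(\<Sum>x\<in>insert a0 T. d x * x * exp (x * z)) = 0" for z
    using DERIV_unique[OF _ DERIV_const] by blast
  \<comment> \<open>Subtracting \<open>a\<^sub>0\<close> times the sum from its derivative eliminates the \<open>a\<^sub>0\<close> term.\<close>
  have shifted: "(\<Sum>x\<in>T. (d x * (x - a0)) * exp (x * z)) = 0" for z
  proof -
    have "(\<Sum>x\<in>T. (d x * (x - a0)) * exp (x * z))
        = (\<Sum>x\<in>insert a0 T. d x * x * exp (x * z)) - a0 * (\<Sum>x\<in>insert a0 T. d x * exp (x * z))"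
      using insert.hyps by (simp add: sum_distrib_left sum_subtractf[symmetric] algebra_simps)
    thus ?thesis using deriv0[of z] insert.prems(1)[of z] by simp
  qed
  have T0: "d x = 0" if "x \<in> T" for x
  proof -
    have "d x * (x - a0) = 0" by (rule insert.IH[OF shifted that])
    thus ?thesis using insert.hyps(2) that by auto
  qed
  moreover have "d a0 = 0" using insert.prems(1)[of 0] insert.hyps T0 by simp
  ultimately show ?case using insert.prems(2) by blast
qed simp

lemma exp_sum_real_eq_0_imp_coeffs_eq_0:
  fixes d :: "complex \<Rightarrow> complex"
  assumes fin: "finite T" and sum0: "\<And>t::real. (\<Sum>x\<in>T. d x * exp (x * of_real t)) = 0" and "x \<in> T"
  shows "d x = 0"
proof (rule exp_sum_eq_0_imp_coeffs_eq_0[OF fin _ \<open>x \<in> T\<close>])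
  fix z
  show "(\<Sum>x\<in>T. d x * exp (x * z)) = 0"
  proof (rule analytic_continuation[where S = UNIV and U = "range of_real" and \<xi> = 0
      and f = "\<lambda>z. \<Sum>x\<in>T. d x * exp (x * z)"])
    show "0 islimpt range complex_of_real"
      unfolding islimpt_approachable
    proof (intro allI impI)
      fix e :: real assume "e > 0"
      moreover have "of_real (e/2) \<in> range complex_of_real" by (rule rangeI)
      ultimately show "\<exists>x'\<in>range complex_of_real. x' \<noteq> 0 \<and> dist x' 0 < e"
        by (intro bexI[of _ "of_real (e/2)"]) auto
    qed
  qed (auto intro!: holomorphic_intros simp: sum0)
qed

lemma sum_int_coeffs_reindex:
  fixes m :: "complex \<Rightarrow> int" and f :: "complex \<Rightarrow> complex"
  assumes T: "finite T" "h ` {a. m a \<noteq> 0} \<subseteq> T" and inv: "\<And>x. h (g x) = x" "\<And>a. g (h a) = a"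
  shows "(\<Sum>x\<in>T. of_int (m (g x)) * f x) = (\<Sum>a | m a \<noteq> 0. of_int (m a) * f (h a))"
proof -
  have "(\<Sum>x\<in>T. of_int (m (g x)) * f x) = (\<Sum>x\<in>h ` {a. m a \<noteq> 0}. of_int (m (g x)) * f x)"
  proof (rule sum.mono_neutral_right[OF T])
    show "\<forall>x\<in>T - h ` {a. m a \<noteq> 0}. of_int (m (g x)) * f x = 0"
      using inv(1) by (metis (mono_tags) DiffD2 image_eqI mem_Collect_eq mult_eq_0_iff of_int_0)
  qed
  also have "\<dots> = (\<Sum>a | m a \<noteq> 0. of_int (m a) * f (h a))"
    by (subst sum.reindex) (auto simp: inj_on_def inv(2), metis inv(2))
  finally show ?thesis .
qed

text \<open>With \<open>u = e\<^sup>t\<close> the functional equation becomes an identity between two exponential sums in \<open>t\<close>,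
  whose coefficients can then be compared.\<close>
lemma powsum_functional_equation_coeffs:
  assumes fin: "finite {a. m a \<noteq> 0}"
    and fe: "\<forall>u>0. powsum m (1 / u) = c * of_real u powr (- \<omega>) * powsum m u"
  shows "of_int (m a) = c * of_int (m (\<omega> - a))"
proof -
  define T where "T = uminus ` {a. m a \<noteq> 0} \<union> (\<lambda>b. b - \<omega>) ` {a. m a \<noteq> 0}"
  have T: "finite T" using fin by (simp add: T_def)
  have "(\<Sum>x\<in>T. (of_int (m (- x)) - c * of_int (m (x + \<omega>))) * exp (x * of_real t)) = 0" for t
  proof -
    have "(\<Sum>x\<in>T. of_int (m (- x)) * exp (x * of_real t)) = powsum m (exp (- t))"
      by (subst sum_int_coeffs_reindex[OF T, where g = uminus and h = uminus]) (auto simp: T_def powsum_exp)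
    also have "\<dots> = c * exp (- \<omega> * of_real t) * powsum m (exp t)"
      using fe[rule_format, of "exp t"] by (simp add: exp_minus of_real_exp_powr divide_inverse)
    also have "\<dots> = c * (\<Sum>x\<in>T. of_int (m (x + \<omega>)) * exp (x * of_real t))"
      by (subst sum_int_coeffs_reindex[OF T, where g = "\<lambda>x. x + \<omega>" and h = "\<lambda>b. b - \<omega>"])
         (auto simp: T_def powsum_exp sum_distrib_left mult_exp_exp algebra_simps)
    finally show ?thesis
      by (simp add: algebra_simps sum_subtractf sum_distrib_left)
  qed
  hence coeff: "of_int (m (- x)) = c * of_int (m (x + \<omega>))" if "x \<in> T" for x
    using exp_sum_real_eq_0_imp_coeffs_eq_0[OF T _ that] by fastforce
  show ?thesis
  proof (cases "- a \<in> T")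
    case True
    thus ?thesis using coeff[of "- a"] by simp
  next
    case False
    hence "m a = 0" "m (\<omega> - a) = 0"
      unfolding T_def by (auto simp: image_iff)
    thus ?thesis by simp
  qed
qed

lemma functional_equation_sign:
  fixes m :: "'a::ab_group_add \<Rightarrow> int" and c :: complex
  assumes "m a0 \<noteq> 0" and coeff: "\<And>a. of_int (m a) = c * of_int (m (\<omega> - a))"
  shows "c = 1 \<or> c = -1"
proof -
  have "of_int (m a0) = c * of_int (m (\<omega> - a0))" by (rule coeff)
  also have "of_int (m (\<omega> - a0)) = c * of_int (m a0)" using coeff[of "\<omega> - a0"] by simp
  finally have "of_int (m a0) = c * (c * of_int (m a0))" .
  hence "c * c = 1" using assms(1) by (metis mult.assoc mult_cancel_right1 of_int_eq_0_iff)
  thus ?thesis by (simp add: square_eq_1_iff)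
qed

lemma zeta_powsum_functional_equation:
  assumes fin: "finite {a. m a \<noteq> 0}" and nz: "\<exists>u>0. powsum m u \<noteq> 0"
    and fe: "\<forall>u>0. powsum m (1 / u) = c * of_real u powr (- \<omega>) * powsum m u"
  shows "c = 1 \<or> c = -1"
    and "m s = 0 \<Longrightarrow> m (\<omega> - s) = 0 \<Longrightarrow>
           zeta (powsum m) (\<omega> - s) = (-1) powi (\<Sum>a | m a \<noteq> 0. m a) * zeta (powsum m) s powr c"
proof -
  note coeff = powsum_functional_equation_coeffs[OF fin fe]
  have "{a. m a \<noteq> 0} \<noteq> {}"
  proof
    assume "{a. m a \<noteq> 0} = {}"
    with nz show False by (simp add: powsum_def)
  qed
  then obtain a0 where "m a0 \<noteq> 0" by blast
  from functional_equation_sign[OF this coeff] show c: "c = 1 \<or> c = -1" .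
  define \<epsilon> :: int where "\<epsilon> = (if c = 1 then 1 else -1)"
  have c_eq: "c = of_int \<epsilon>" using c by (auto simp: \<epsilon>_def)
  have \<epsilon>: "\<epsilon> = 1 \<or> \<epsilon> = -1" by (simp add: \<epsilon>_def)
  have sym: "m (\<omega> - a) = \<epsilon> * m a" for a
  proof -
    have "of_int (m (\<omega> - a)) = c * of_int (m a)" using coeff[of "\<omega> - a"] by simp
    thus ?thesis unfolding c_eq of_int_mult[symmetric] of_int_eq_iff .
  qed
  assume s: "m s = 0" "m (\<omega> - s) = 0"
  have "zeta (powsum m) (\<omega> - s) = zeta_powsum m (\<omega> - s)"
    by (rule zeta_powsum_eq[OF fin s(2)])
  also have "\<dots> = (-1) powi (\<Sum>a | m a \<noteq> 0. m a) * zeta_powsum m s powi \<epsilon>"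
    by (rule zeta_powsum_reflection[where m = m and \<omega> = \<omega>, OF \<epsilon> sym])
  also have "zeta_powsum m s powi \<epsilon> = zeta (powsum m) s powr c"
    unfolding c_eq zeta_powsum_eq[OF fin s(1)] using \<epsilon> by (subst complex_powr_of_int) auto
  finally show "zeta (powsum m) (\<omega> - s) = (-1) powi (\<Sum>a | m a \<noteq> 0. m a) * zeta (powsum m) s powr c" .
qed

theorem proposition3p6:
  fixes m :: "complex \<Rightarrow> int"
  assumes fin: "finite {a. m a \<noteq> 0}"
  shows "(\<forall>s. s \<notin> {a. m a \<noteq> 0} \<longrightarrow>
            zeta (powsum m) s = (\<Prod>a\<in>{a. m a \<noteq> 0}. (1 / (s - a)) powi m a))
       \<and> (\<forall>s. - s \<notin> {a. m a \<noteq> 0} \<longrightarrow>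
            zeta (dual (powsum m)) s = (\<Prod>a\<in>{a. m a \<noteq> 0}. (1 / (s + a)) powi m a))
       \<and> (\<forall>s. s \<notin> {a. m a \<noteq> 0} \<longrightarrow>
            epsilon (powsum m) s = (-1) powi (\<Sum>a\<in>{a. m a \<noteq> 0}. m a))
       \<and> (\<forall>c \<omega> :: complex.
            (\<exists>u>0. powsum m u \<noteq> 0) \<and>
            (\<forall>u>0. powsum m (1 / u) = c * of_real u powr (- \<omega>) * powsum m u)
            \<longrightarrow> (c = 1 \<or> c = -1) \<and>
                (\<forall>s. s \<notin> {a. m a \<noteq> 0} \<and> \<omega> - s \<notin> {a. m a \<noteq> 0} \<longrightarrow>
                   zeta (powsum m) (\<omega> - s)
                     = (-1) powi (\<Sum>a\<in>{a. m a \<noteq> 0}. m a) * zeta (powsum m) s powr c))"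
proof (intro conjI allI impI)
  show "zeta (powsum m) s = (\<Prod>a\<in>{a. m a \<noteq> 0}. (1 / (s - a)) powi m a)"
    if "s \<notin> {a. m a \<noteq> 0}" for s
    using that zeta_powsum_eq[OF fin] by (simp add: zeta_powsum_def)
  show "zeta (dual (powsum m)) s = (\<Prod>a\<in>{a. m a \<noteq> 0}. (1 / (s + a)) powi m a)"
    if "- s \<notin> {a. m a \<noteq> 0}" for s
    using that zeta_dual_powsum[OF fin] by simp
  show "epsilon (powsum m) s = (-1) powi (\<Sum>a\<in>{a. m a \<noteq> 0}. m a)"
    if "s \<notin> {a. m a \<noteq> 0}" for s
    using that epsilon_powsum[OF fin] by simp
  fix c \<omega> :: complex
  assume fe: "(\<exists>u>0. powsum m u \<noteq> 0) \<and> (\<forall>u>0. powsum m (1 / u) = c * of_real u powr (- \<omega>) * powsum m u)"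
  show "c = 1 \<or> c = -1"
    using fe zeta_powsum_functional_equation(1)[OF fin] by blast
  show "zeta (powsum m) (\<omega> - s) = (-1) powi (\<Sum>a\<in>{a. m a \<noteq> 0}. m a) * zeta (powsum m) s powr c"
    if "s \<notin> {a. m a \<noteq> 0} \<and> \<omega> - s \<notin> {a. m a \<noteq> 0}" for s
    using fe that zeta_powsum_functional_equation(2)[OF fin] by simp
qed

end
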